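(* Let $P\subset\mathbb{R}^2$ be a finite set of $n\ge 1$ points. Then there exists $p\in P$ such that $p\in T$ for every downward facing equilateral triangle $T$ with $|T\cap P|>\frac{2n}{3}$.
   Context: A downward facing equilateral triangle is a closed (filled) equilateral triangle in $\mathbb{R}^2$ having one side parallel to the $x$-axis and the vertex opposite to that side lying strictly below the line containing that side. Equivalently, it is a set of the form $\bigcap_{i=1}^3\{x:\langle u_i,x\rangle\le t_i\}$ with nonempty interior, where $u_1,u_2,u_3$ are the unit vectors making angles $90^\circ,210^\circ,330^\circ$ with the positive $x$-axis and $t_1,t_2,t_3\in\mathbb{R}$. *)

theory Defs
  imports "HOL-Analysis.Analysis"
begin

text \<open>Points of the plane are modelled as pairs of reals. The unit vectors u1, u2, u3
  make angles 90, 210, 330 degrees with the positive x-axis.\<close>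

definition u1 :: "real \<times> real" where "u1 = (0, 1)"
definition u2 :: "real \<times> real" where "u2 = (- sqrt 3 / 2, - 1 / 2)"
definition u3 :: "real \<times> real" where "u3 = (sqrt 3 / 2, - 1 / 2)"

definition down_triangle :: "(real \<times> real) set \<Rightarrow> bool" where
  "down_triangle T \<longleftrightarrow>
     (\<exists>t1 t2 t3 :: real.
        T = {x. u1 \<bullet> x \<le> t1} \<inter> {x. u2 \<bullet> x \<le> t2} \<inter> {x. u3 \<bullet> x \<le> t3}
        \<and> interior T \<noteq> {})"

end

theory Submission
  imports Defs
begin

text \<open>
  Call a downward triangle heavy if it contains more than 2n/3 points of P.
  A downward triangle is cut out by three half-planes u_i . x \<le> t_i, so it suffices to
  work with an arbitrary family H of sets of the form {f1 \<le> t1} \<inter> {f2 \<le> t2} \<inter> {f3 \<le> t3}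
  for three real functionals f_i.  For each i pick a heavy T_i in H for which the largest
  value of f_i on T_i \<inter> P is as small as possible (possible since only finitely many values
  occur).  Three sets each containing more than 2/3 of P share a point p of P by counting.
  For any heavy T = {f_i \<le> t_i} and each i, f_i p is at most the maximum of f_i on
  T_i \<inter> P, hence at most the maximum of f_i on T \<inter> P, hence at most t_i; so p \<in> T.
\<close>

text \<open>Counting: three subsets, each containing more than two thirds of the n points of P,
  have a common point in P, because each misses fewer than n/3 points.\<close>

lemma three_majorities_meet:
  fixes P A B C :: "'a set"
  assumes fin: "finite P" and n: "card P = n"
    and hA: "real (card (A \<inter> P)) > 2 * real n / 3"
    and hB: "real (card (B \<inter> P)) > 2 * real n / 3"
    and hC: "real (card (C \<inter> P)) > 2 * real n / 3"
  shows "\<exists>p\<in>P. p \<in> A \<and> p \<in> B \<and> p \<in> C"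
proof (rule ccontr)
  have missed: "real (card (P - X)) = real n - real (card (X \<inter> P))" for X :: "'a set"
    using card_Int_Diff[OF fin, of X] n by (simp add: Int_commute)
  assume "\<not> ?thesis"
  then have "P = (P - A) \<union> (P - B) \<union> (P - C)" by auto
  then have "card P \<le> card ((P - A) \<union> (P - B)) + card (P - C)"
    by (metis card_Un_le)
  also have "\<dots> \<le> card (P - A) + card (P - B) + card (P - C)"
    using card_Un_le[of "P - A" "P - B"] by linarith
  finally have "card P \<le> card (P - A) + card (P - B) + card (P - C)" .
  then have "real n \<le> real (card (P - A)) + real (card (P - B)) + real (card (P - C))"
    using n by linarith
  then show False using hA hB hC unfolding missed by linarith
qed

text \<open>Minimisation: in a nonempty family H of sets meeting the finite set P, some member
  T0 minimises the maximum of f over T \<inter> P.  The maxima range over the finite set f ` P,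
  so the minimum exists even if H is infinite.\<close>

lemma exists_minimal_maximum:
  fixes P :: "'a set" and H :: "'a set set" and f :: "'a \<Rightarrow> real"
  assumes fin: "finite P" and ne: "H \<noteq> {}" and meets: "\<And>T. T \<in> H \<Longrightarrow> T \<inter> P \<noteq> {}"
  shows "\<exists>T0\<in>H. \<forall>T\<in>H. \<forall>x\<in>T0 \<inter> P. f x \<le> Max (f ` (T \<inter> P))"
proof -
  define m where "m = (\<lambda>T. Max (f ` (T \<inter> P)))"
  have m_attained: "m T \<in> f ` P" if "T \<in> H" for T
  proof -
    have "m T \<in> f ` (T \<inter> P)"
      unfolding m_def using fin meets[OF that] by (intro Max_in) auto
    then show ?thesis by blast
  qed
  have fin_vals: "finite (m ` H)"
    using m_attained fin by (metis finite_imageI finite_subset image_subsetI)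
  have "Min (m ` H) \<in> m ` H" using Min_in[OF fin_vals] ne by blast
  then obtain T0 where T0: "T0 \<in> H" "m T0 = Min (m ` H)" by (metis imageE)
  show ?thesis
  proof (intro bexI[OF _ T0(1)] ballI)
    fix T x assume T: "T \<in> H" and x: "x \<in> T0 \<inter> P"
    have "f x \<le> m T0" unfolding m_def using x fin by (intro Max_ge) auto
    also have "\<dots> \<le> m T" unfolding T0(2) using T fin_vals by (intro Min_le) auto
    finally show "f x \<le> Max (f ` (T \<inter> P))" unfolding m_def .
  qed
qed

lemma Max_image_le_level:
  assumes "finite S" and "S \<noteq> {}" and "S \<subseteq> {x. f x \<le> (t :: real)}"
  shows "Max (f ` S) \<le> t"
  using assms by (subst Max_le_iff) auto

definition three_level_set :: "('a \<Rightarrow> real) \<Rightarrow> ('a \<Rightarrow> real) \<Rightarrow> ('a \<Rightarrow> real) \<Rightarrow> 'a set \<Rightarrow> bool" where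
  "three_level_set f1 f2 f3 T \<longleftrightarrow>
     (\<exists>t1 t2 t3. T = {x. f1 x \<le> t1} \<inter> {x. f2 x \<le> t2} \<inter> {x. f3 x \<le> t3})"

lemma heavy_three_level_sets_common_point:
  fixes P :: "'a set" and H :: "'a set set"
  assumes fin: "finite P" and n: "card P = n" and n1: "n \<ge> 1"
    and shape: "\<And>T. T \<in> H \<Longrightarrow> three_level_set f1 f2 f3 T"
    and heavy: "\<And>T. T \<in> H \<Longrightarrow> real (card (T \<inter> P)) > 2 * real n / 3"
  shows "\<exists>p\<in>P. \<forall>T\<in>H. p \<in> T"
proof (cases "H = {}")
  case True
  have "P \<noteq> {}" using n n1 by auto
  then show ?thesis using True by auto
next
  case False
  have meets: "T \<inter> P \<noteq> {}" if "T \<in> H" for T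
    using heavy[OF that] n1 by auto
  note minimal = exists_minimal_maximum[OF fin False meets]
  obtain T1 where T1: "T1 \<in> H" "\<forall>T\<in>H. \<forall>x\<in>T1 \<inter> P. f1 x \<le> Max (f1 ` (T \<inter> P))"
    using minimal by blast
  obtain T2 where T2: "T2 \<in> H" "\<forall>T\<in>H. \<forall>x\<in>T2 \<inter> P. f2 x \<le> Max (f2 ` (T \<inter> P))"
    using minimal by blast
  obtain T3 where T3: "T3 \<in> H" "\<forall>T\<in>H. \<forall>x\<in>T3 \<inter> P. f3 x \<le> Max (f3 ` (T \<inter> P))"
    using minimal by blast
  obtain p where p: "p \<in> P" "p \<in> T1" "p \<in> T2" "p \<in> T3"
    using three_majorities_meet[OF fin n heavy heavy heavy, OF T1(1) T2(1) T3(1)] by blast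
  show ?thesis
  proof (intro bexI[OF _ p(1)] ballI)
    fix T assume T: "T \<in> H"
    obtain t1 t2 t3 where T_eq: "T = {x. f1 x \<le> t1} \<inter> {x. f2 x \<le> t2} \<inter> {x. f3 x \<le> t3}"
      using shape[OF T] unfolding three_level_set_def by blast
    have S: "finite (T \<inter> P)" "T \<inter> P \<noteq> {}" using fin meets[OF T] by auto
    have "f1 p \<le> Max (f1 ` (T \<inter> P))" using T1(2) T p by blast
    also have "\<dots> \<le> t1" using S by (intro Max_image_le_level) (auto simp: T_eq)
    moreover have "f2 p \<le> Max (f2 ` (T \<inter> P))" using T2(2) T p by blast
    moreover have "\<dots> \<le> t2" using S by (intro Max_image_le_level) (auto simp: T_eq)
    moreover have "f3 p \<le> Max (f3 ` (T \<inter> P))" using T3(2) T p by blast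
    moreover have "\<dots> \<le> t3" using S by (intro Max_image_le_level) (auto simp: T_eq)
    ultimately show "p \<in> T" unfolding T_eq by auto
  qed
qed

lemma down_triangle_three_level_set:
  "down_triangle T \<Longrightarrow> three_level_set ((\<bullet>) u1) ((\<bullet>) u2) ((\<bullet>) u3) T"
  unfolding down_triangle_def three_level_set_def by blast

theorem corollary1:
  fixes P :: "(real \<times> real) set" and n :: nat
  assumes "finite P" and "card P = n" and "n \<ge> 1"
  shows "\<exists>p\<in>P. \<forall>T. down_triangle T \<and> real (card (T \<inter> P)) > 2 * real n / 3 \<longrightarrow> p \<in> T"
proof -
  define H where "H = {T. down_triangle T \<and> real (card (T \<inter> P)) > 2 * real n / 3}"
  have "\<exists>p\<in>P. \<forall>T\<in>H. p \<in> T"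
    using assms down_triangle_three_level_set
    by (intro heavy_three_level_sets_common_point) (auto simp: H_def)
  then show ?thesis unfolding H_def by blast
qed

end
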